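(* In the consistent-read iteration defined in the context, for any step size $\beta\in\mathbb{R}$, any deterministic $x_0$, any integer $\tau\ge0$ and any deterministic $k(j)$ with $j-\tau\le k(j)\le j$, we have for every $j\ge0$ \[E_{j+1}\ge\Big(1-\frac{\lambda_{\max}}{n}\Big)E_j.\]
   Context: Let $n\ge2$ and let $A\in\mathbb{R}^{n\times n}$ be symmetric positive definite with all diagonal entries equal to $1$; let $b\in\mathbb{R}^n$ and $x^\star=A^{-1}b$. Let $\lambda_{\max}$ be the largest eigenvalue of $A$. Write $(x,y)_A=y^TAx$ and $\|x\|_A=\sqrt{(x,x)_A}$; $e^{(1)},\dots,e^{(n)}$ are the standard basis vectors. Consistent-read iteration: let $d_0,d_1,\dots$ be i.i.d. random vectors, each uniformly distributed on $\{e^{(1)},\dots,e^{(n)}\}$; let $\tau\ge0$ be an integer and $k(0),k(1),\dots$ deterministic integers with $j-\tau\le k(j)\le j$; given $x_0\in\mathbb{R}^n$ and a step size $\beta$, define for $j\ge0$ \[\gamma_j=(x^\star-x_{k(j)},d_j)_A,\qquad x_{j+1}=x_j+\beta\gamma_jd_j.\] Define $E_m=\mathbb{E}[\|x_m-x^\star\|_A^2]$. *)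

theory Defs
  imports "HOL-Analysis.Analysis" "HOL-Probability.Probability"
begin

definition A_inner :: "real^'n^'n \<Rightarrow> real^'n \<Rightarrow> real^'n \<Rightarrow> real" where
  "A_inner A x y = y \<bullet> (A *v x)"

definition is_eigenvalue :: "real^'n^'n \<Rightarrow> real \<Rightarrow> bool" where
  "is_eigenvalue A l \<longleftrightarrow> (\<exists>v. v \<noteq> 0 \<and> A *v v = l *\<^sub>R v)"

definition lambda_max :: "real^'n^'n \<Rightarrow> real" where
  "lambda_max A = Max {l. is_eigenvalue A l}"

text \<open>Consistent-read iteration for a fixed realisation d of the random directions:
  d j is the index of the basis vector d_j = e^(d j). The min is vacuous under the
  standing hypothesis k j \<le> j; it only makes the recursion total.\<close>
fun cr_iter :: "real^'n^'n \<Rightarrow> real^'n \<Rightarrow> real \<Rightarrow> real^'n \<Rightarrow> (nat \<Rightarrow> nat)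
                 \<Rightarrow> (nat \<Rightarrow> 'n) \<Rightarrow> nat \<Rightarrow> real^'n" where
  "cr_iter A b \<beta> x0 k d 0 = x0"
| "cr_iter A b \<beta> x0 k d (Suc j) =
     cr_iter A b \<beta> x0 k d j
     + (\<beta> * A_inner A (matrix_inv A *v b - cr_iter A b \<beta> x0 k d (min (k j) j)) (axis (d j) 1))
       *\<^sub>R axis (d j) 1"

text \<open>E_m = E[ ||x_m - x*||_A^2 ], where d_0,...,d_{m-1} are i.i.d. uniform on the
  standard basis (x_m only depends on these).\<close>
definition cr_err :: "real^'n^'n \<Rightarrow> real^'n \<Rightarrow> real \<Rightarrow> real^'n \<Rightarrow> (nat \<Rightarrow> nat) \<Rightarrow> nat \<Rightarrow> real" where
  "cr_err A b \<beta> x0 k m =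
     measure_pmf.expectation (Pi_pmf {..<m} undefined (\<lambda>_. pmf_of_set (UNIV :: 'n set)))
       (\<lambda>d. let e = cr_iter A b \<beta> x0 k d m - matrix_inv A *v b in A_inner A e e)"

end

theory Submission
  imports Defs
begin

text \<open>Write e for the error x_j - x*. Whatever the step length t, moving along the
  coordinate direction e^(i) gives ||e + t e^(i)||_A^2 = ||e||_A^2 + 2 t (Ae)_i + t^2, since the
  diagonal of A is 1, which is at least ||e||_A^2 - (Ae)_i^2. The iterate x_j does not depend on d_j,
  so averaging over the uniform direction d_j loses at most |Ae|^2 / n, and
  |Ae|^2 <= lambda_max e^T A e because (Ae, e)_A^2 <= (Ae, Ae)_A (e, e)_A by Cauchy-Schwarz for the
  A-inner product and (Ae, Ae)_A <= lambda_max |Ae|^2 by the Rayleigh bound.\<close>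

lemma quadratic_nonneg_imp_discriminant_le:
  fixes a m c :: real
  assumes a: "0 \<le> a" and nonneg: "\<And>t. 0 \<le> c + 2 * m * t + a * t\<^sup>2"
  shows "m\<^sup>2 \<le> a * c"
proof (cases "a = 0")
  case True
  have "m = 0"
  proof (rule ccontr)
    assume "m \<noteq> 0"
    then have "c + 2 * m * (- (c + 1) / (2 * m)) + a * (- (c + 1) / (2 * m))\<^sup>2 = -1"
      using True by (simp add: field_simps)
    with nonneg show False by (metis neg_0_le_iff_le not_one_le_zero)
  qed
  then show ?thesis by (simp add: True)
next
  case False
  with a have "a > 0" by simp
  have "0 \<le> c + 2 * m * (- m / a) + a * (- m / a)\<^sup>2" by (rule nonneg)
  also have "\<dots> = (a * c - m\<^sup>2) / a"
    using \<open>a > 0\<close> by (simp add: field_simps power2_eq_square)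
  finally show ?thesis using \<open>a > 0\<close> by (simp add: zero_le_divide_iff)
qed

lemma symmetric_matrix_inner_commute:
  fixes A :: "real^'n^'n"
  assumes "transpose A = A"
  shows "x \<bullet> (A *v y) = y \<bullet> (A *v x)"
  by (metis assms dot_lmul_matrix inner_commute vector_transpose_matrix)

lemma quadratic_form_add_scaleR:
  fixes A :: "real^'n^'n"
  assumes "transpose A = A"
  shows "(u + t *\<^sub>R h) \<bullet> (A *v (u + t *\<^sub>R h))
         = u \<bullet> (A *v u) + 2 * t * (h \<bullet> (A *v u)) + t\<^sup>2 * (h \<bullet> (A *v h))"
  using symmetric_matrix_inner_commute[OF assms, of u h]
  by (simp add: matrix_vector_right_distrib matrix_vector_mult_scaleR inner_add_left
      inner_add_right power2_eq_square algebra_simps)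

lemma quadratic_form_cauchy_schwarz:
  fixes A :: "real^'n^'n"
  assumes sym: "transpose A = A" and psd: "\<And>z. 0 \<le> z \<bullet> (A *v z)"
  shows "(x \<bullet> (A *v y))\<^sup>2 \<le> (y \<bullet> (A *v y)) * (x \<bullet> (A *v x))"
proof (rule quadratic_nonneg_imp_discriminant_le)
  show "0 \<le> x \<bullet> (A *v x) + 2 * (x \<bullet> (A *v y)) * t + (y \<bullet> (A *v y)) * t\<^sup>2" for t
    using psd[of "x + t *\<^sub>R y"] symmetric_matrix_inner_commute[OF sym, of x y]
    by (simp add: quadratic_form_add_scaleR[OF sym] mult_ac)
qed (rule psd)

lemma symmetric_matrix_has_dominating_eigenvalue:
  fixes A :: "real^'n^'n"
  assumes sym: "transpose A = A"
  obtains c where "is_eigenvalue A c" "\<And>v. v \<bullet> (A *v v) \<le> c * (v \<bullet> v)"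
proof -
  let ?q = "\<lambda>v::real^'n. v \<bullet> (A *v v)"
  have "sphere (0::real^'n) 1 \<noteq> {}"
    using norm_axis_1 by (metis mem_sphere_0 empty_iff)
  moreover have "continuous_on (sphere 0 1) ?q"
    by (intro continuous_intros)
  ultimately obtain u where "u \<in> sphere 0 1" "\<forall>v\<in>sphere 0 1. ?q v \<le> ?q u"
    using continuous_attains_sup[OF compact_sphere] by blast
  then have u: "norm u = 1" and umax: "\<And>v. norm v = 1 \<Longrightarrow> ?q v \<le> ?q u"
    by simp_all
  define c where "c = ?q u"
  have bound: "?q v \<le> c * (v \<bullet> v)" for v
  proof (cases "v = 0")
    case False
    have "?q (v /\<^sub>R norm v) \<le> c"
      using False unfolding c_def by (intro umax) simp
    moreover have "?q (v /\<^sub>R norm v) = ?q v / (v \<bullet> v)"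
      by (simp add: matrix_vector_mult_scaleR dot_square_norm power2_eq_square divide_inverse mult_ac)
    ultimately show ?thesis
      using False by (simp add: pos_divide_le_eq)
  qed simp
  txt \<open>First-order optimality of u along the curves u + t h.\<close>
  have eigen_eq: "h \<bullet> (A *v u) = c * (h \<bullet> u)" for h
  proof -
    have "(c * (h \<bullet> u) - h \<bullet> (A *v u))\<^sup>2 \<le> (c * (h \<bullet> h) - ?q h) * 0"
    proof (rule quadratic_nonneg_imp_discriminant_le)
      show "0 \<le> c * (h \<bullet> h) - ?q h" using bound[of h] by simp
      fix t
      have "(u + t *\<^sub>R h) \<bullet> (u + t *\<^sub>R h) = 1 + 2 * t * (h \<bullet> u) + t\<^sup>2 * (h \<bullet> h)"
        using u by (simp add: inner_add_left inner_add_right inner_commute norm_eq_1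
            power2_eq_square algebra_simps)
      then have "c + 2 * t * (h \<bullet> (A *v u)) + t\<^sup>2 * ?q h
                 \<le> c * (1 + 2 * t * (h \<bullet> u) + t\<^sup>2 * (h \<bullet> h))"
        using bound[of "u + t *\<^sub>R h"] unfolding quadratic_form_add_scaleR[OF sym] c_def[symmetric]
        by simp
      then show "0 \<le> 0 + 2 * (c * (h \<bullet> u) - h \<bullet> (A *v u)) * t + (c * (h \<bullet> h) - ?q h) * t\<^sup>2"
        by (simp add: algebra_simps)
    qed
    then show ?thesis by simp
  qed
  have "(A *v u - c *\<^sub>R u) \<bullet> (A *v u - c *\<^sub>R u) = 0"
    using eigen_eq[of "A *v u - c *\<^sub>R u"] by (simp add: inner_diff_right)
  then have "A *v u = c *\<^sub>R u" by simp
  moreover have "u \<noteq> 0" using u by auto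
  ultimately have "is_eigenvalue A c"
    unfolding is_eigenvalue_def by blast
  then show ?thesis using bound by (rule that)
qed

lemma finite_eigenvalues_symmetric:
  fixes A :: "real^'n^'n"
  assumes sym: "transpose A = A"
  shows "finite {l. is_eigenvalue A l}"
proof -
  let ?S = "{l. is_eigenvalue A l}"
  define v where "v l = (SOME x. x \<noteq> 0 \<and> A *v x = l *\<^sub>R x)" for l
  have v: "v l \<noteq> 0" "A *v v l = l *\<^sub>R v l" if "l \<in> ?S" for l
    using that someI_ex[of "\<lambda>x. x \<noteq> 0 \<and> A *v x = l *\<^sub>R x"]
    unfolding v_def is_eigenvalue_def by auto
  have "v l1 \<bullet> v l2 = 0" if l: "l1 \<in> ?S" "l2 \<in> ?S" "l1 \<noteq> l2" for l1 l2
  proof -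
    have "l1 * (v l1 \<bullet> v l2) = v l2 \<bullet> (A *v v l1)"
      using v(2)[OF l(1)] by (simp add: inner_commute)
    also have "\<dots> = v l1 \<bullet> (A *v v l2)"
      by (rule symmetric_matrix_inner_commute[OF sym])
    also have "\<dots> = l2 * (v l1 \<bullet> v l2)"
      using v(2)[OF l(2)] by simp
    finally show ?thesis using l(3) by simp
  qed
  then have "pairwise orthogonal (v ` ?S)"
    unfolding pairwise_def orthogonal_def by blast
  then have "finite (v ` ?S)"
    by (rule pairwise_orthogonal_imp_finite)
  moreover have "inj_on v ?S"
  proof (rule inj_onI)
    fix l1 l2 assume l: "l1 \<in> ?S" "l2 \<in> ?S" "v l1 = v l2"
    then have "l1 *\<^sub>R v l1 = l2 *\<^sub>R v l1"
      using v(2) by metis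
    then show "l1 = l2" using v(1)[OF l(1)] by simp
  qed
  ultimately show ?thesis by (rule finite_imageD)
qed

lemma quadratic_form_le_lambda_max:
  fixes A :: "real^'n^'n"
  assumes sym: "transpose A = A"
  shows "v \<bullet> (A *v v) \<le> lambda_max A * (v \<bullet> v)"
proof -
  obtain c where c: "is_eigenvalue A c" and bound: "\<And>v. v \<bullet> (A *v v) \<le> c * (v \<bullet> v)"
    using symmetric_matrix_has_dominating_eigenvalue[OF sym] by blast
  have "c \<le> lambda_max A"
    unfolding lambda_max_def using finite_eigenvalues_symmetric[OF sym] c by (intro Max_ge) auto
  then have "c * (v \<bullet> v) \<le> lambda_max A * (v \<bullet> v)"
    by (intro mult_right_mono) simp_all
  with bound[of v] show ?thesis by linarith
qed

lemma inner_matrix_vector_self_le_lambda_max: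
  fixes A :: "real^'n^'n"
  assumes sym: "transpose A = A" and psd: "\<And>z. 0 \<le> z \<bullet> (A *v z)"
  shows "(A *v e) \<bullet> (A *v e) \<le> lambda_max A * (e \<bullet> (A *v e))"
proof (cases "A *v e = 0")
  case False
  define w where "w = A *v e"
  have "(w \<bullet> w)\<^sup>2 \<le> (e \<bullet> (A *v e)) * (w \<bullet> (A *v w))"
    using quadratic_form_cauchy_schwarz[OF sym psd, of w e] by (simp add: w_def)
  also have "\<dots> \<le> (e \<bullet> (A *v e)) * (lambda_max A * (w \<bullet> w))"
    by (intro mult_left_mono quadratic_form_le_lambda_max[OF sym] psd)
  finally have "(w \<bullet> w) * (w \<bullet> w) \<le> (lambda_max A * (e \<bullet> (A *v e))) * (w \<bullet> w)"
    by (simp add: power2_eq_square mult_ac)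
  moreover have "w \<bullet> w > 0" using False by (simp add: w_def)
  ultimately show ?thesis by (simp add: w_def)
qed simp

lemma quadratic_form_coordinate_step_ge:
  fixes A :: "real^'n^'n"
  assumes sym: "transpose A = A" and diag: "A $ i $ i = 1"
  shows "A_inner A (e + t *\<^sub>R axis i 1) (e + t *\<^sub>R axis i 1) \<ge> A_inner A e e - ((A *v e) $ i)\<^sup>2"
proof -
  have "axis i 1 \<bullet> (A *v axis i (1::real)) = 1"
    using diag by (simp add: inner_axis' matrix_vector_mult_basis column_def)
  then have "A_inner A (e + t *\<^sub>R axis i 1) (e + t *\<^sub>R axis i 1)
             = A_inner A e e + 2 * t * (A *v e) $ i + t\<^sup>2"
    unfolding A_inner_def quadratic_form_add_scaleR[OF sym] by (simp add: inner_axis')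
  moreover have "0 \<le> (t + (A *v e) $ i)\<^sup>2" by simp
  ultimately show ?thesis by (simp add: power2_eq_square algebra_simps)
qed

lemma sum_coordinate_steps_ge:
  fixes A :: "real^'n^'n" and t :: "'n \<Rightarrow> real"
  assumes sym: "transpose A = A" and psd: "\<And>z. 0 \<le> z \<bullet> (A *v z)"
    and diag: "\<And>i. A $ i $ i = 1"
  shows "(\<Sum>i\<in>UNIV. A_inner A (e + t i *\<^sub>R axis i 1) (e + t i *\<^sub>R axis i 1))
         \<ge> (real CARD('n) - lambda_max A) * A_inner A e e"
proof -
  have "(real CARD('n) - lambda_max A) * A_inner A e e
        \<le> real CARD('n) * A_inner A e e - (A *v e) \<bullet> (A *v e)"
    using inner_matrix_vector_self_le_lambda_max[OF sym psd, of e]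
    by (simp add: A_inner_def algebra_simps)
  also have "\<dots> = (\<Sum>i\<in>UNIV. A_inner A e e - ((A *v e) $ i)\<^sup>2)"
    by (simp add: sum_subtractf inner_vec_def power2_eq_square)
  also have "\<dots> \<le> (\<Sum>i\<in>UNIV. A_inner A (e + t i *\<^sub>R axis i 1) (e + t i *\<^sub>R axis i 1))"
    by (intro sum_mono quadratic_form_coordinate_step_ge[OF sym diag])
  finally show ?thesis .
qed

lemma expectation_pair_pmf_finite:
  fixes h :: "'a \<times> 'b \<Rightarrow> real"
  assumes p: "finite (set_pmf p)" and q: "finite (set_pmf q)"
  shows "measure_pmf.expectation (pair_pmf p q) h =
         measure_pmf.expectation q (\<lambda>y. measure_pmf.expectation p (\<lambda>x. h (x, y)))"
proof -
  have "measure_pmf.expectation (pair_pmf p q) h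
        = (\<Sum>z\<in>set_pmf p \<times> set_pmf q. h z * pmf (pair_pmf p q) z)"
    using p q by (intro integral_measure_pmf_real) auto
  also have "\<dots> = (\<Sum>x\<in>set_pmf p. \<Sum>y\<in>set_pmf q. h (x, y) * (pmf p x * pmf q y))"
    by (simp add: sum.cartesian_product) (auto intro!: sum.cong simp: pmf_pair)
  also have "\<dots> = (\<Sum>y\<in>set_pmf q. (\<Sum>x\<in>set_pmf p. h (x, y) * pmf p x) * pmf q y)"
    by (subst sum.swap) (simp add: sum_distrib_left sum_distrib_right mult_ac)
  also have "\<dots> = measure_pmf.expectation q (\<lambda>y. measure_pmf.expectation p (\<lambda>x. h (x, y)))"
    using p q by (simp add: integral_measure_pmf_real)
  finally show ?thesis .
qed

lemma finite_set_Pi_pmf: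
  assumes "finite A" "\<And>x. x \<in> A \<Longrightarrow> finite (set_pmf (p x))"
  shows "finite (set_pmf (Pi_pmf A dflt p))"
  using assms by (simp add: set_Pi_pmf finite_PiE_dflt)

lemma expectation_Pi_pmf_uniform_Suc:
  fixes g :: "(nat \<Rightarrow> 'n::finite) \<Rightarrow> real"
  shows "measure_pmf.expectation (Pi_pmf {..<Suc m} dflt (\<lambda>_. pmf_of_set UNIV)) g
       = measure_pmf.expectation (Pi_pmf {..<m} dflt (\<lambda>_. pmf_of_set UNIV))
           (\<lambda>f. (\<Sum>y\<in>UNIV. g (f(m := y))) / real CARD('n))"
  by (simp add: lessThan_Suc Pi_pmf_insert expectation_pair_pmf_finite finite_set_Pi_pmf
      integral_pmf_of_set case_prod_beta)

lemma cr_iter_cong: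
  assumes "\<And>i. i < m \<Longrightarrow> d i = d' i" and k_hi: "\<And>j. k j \<le> j"
  shows "cr_iter A b \<beta> x0 k d m = cr_iter A b \<beta> x0 k d' m"
  using assms(1)
proof (induction m rule: less_induct)
  case (less m)
  show ?case
  proof (cases m)
    case (Suc j)
    with less k_hi[of j] show ?thesis by (simp add: min_def)
  qed simp
qed

lemma cr_iter_Suc_fun_upd:
  assumes k_hi: "\<And>j. k j \<le> j"
  shows "\<exists>t. cr_iter A b \<beta> x0 k (d(j := i)) (Suc j) = cr_iter A b \<beta> x0 k d j + t *\<^sub>R axis i 1"
proof -
  have "cr_iter A b \<beta> x0 k (d(j := i)) m = cr_iter A b \<beta> x0 k d m" if "m \<le> j" for m
    using that by (intro cr_iter_cong k_hi) auto
  then show ?thesis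
    using k_hi[of j] by simp
qed

definition cr_sq_err :: "real^'n^'n \<Rightarrow> real^'n \<Rightarrow> real \<Rightarrow> real^'n \<Rightarrow> (nat \<Rightarrow> nat)
                         \<Rightarrow> (nat \<Rightarrow> 'n) \<Rightarrow> nat \<Rightarrow> real" where
  "cr_sq_err A b \<beta> x0 k d m =
     (let e = cr_iter A b \<beta> x0 k d m - matrix_inv A *v b in A_inner A e e)"

lemma cr_sq_err_fun_upd_sum_ge:
  fixes A :: "real^'n^'n"
  assumes sym: "transpose A = A" and psd: "\<And>z. 0 \<le> z \<bullet> (A *v z)"
    and diag: "\<And>i. A $ i $ i = 1" and k_hi: "\<And>j. k j \<le> j"
  shows "(real CARD('n) - lambda_max A) * cr_sq_err A b \<beta> x0 k d j
         \<le> (\<Sum>i\<in>UNIV. cr_sq_err A b \<beta> x0 k (d(j := i)) (Suc j))"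
proof -
  have "\<forall>i. \<exists>t. cr_iter A b \<beta> x0 k (d(j := i)) (Suc j) = cr_iter A b \<beta> x0 k d j + t *\<^sub>R axis i 1"
    using cr_iter_Suc_fun_upd[OF k_hi] by blast
  then obtain t
    where t: "\<And>i. cr_iter A b \<beta> x0 k (d(j := i)) (Suc j) = cr_iter A b \<beta> x0 k d j + t i *\<^sub>R axis i 1"
    by metis
  define e where "e = cr_iter A b \<beta> x0 k d j - matrix_inv A *v b"
  have "cr_sq_err A b \<beta> x0 k (d(j := i)) (Suc j) = A_inner A (e + t i *\<^sub>R axis i 1) (e + t i *\<^sub>R axis i 1)"
    for i
    unfolding cr_sq_err_def Let_def t e_def by (simp add: algebra_simps)
  moreover have "cr_sq_err A b \<beta> x0 k d j = A_inner A e e"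
    unfolding cr_sq_err_def Let_def e_def ..
  ultimately show ?thesis
    using sum_coordinate_steps_ge[OF sym psd diag] by simp
qed

theorem mainTheorem6:
  fixes A :: "real^'n^'n" and b x0 :: "real^'n" and \<beta> :: real
    and \<tau> :: nat and k :: "nat \<Rightarrow> nat"
  assumes n2: "CARD('n) \<ge> 2"
    and sym: "transpose A = A"
    and posdef: "\<And>x. x \<noteq> 0 \<Longrightarrow> x \<bullet> (A *v x) > 0"
    and diag: "\<And>i. A $ i $ i = 1"
    and k_lo: "\<And>j. int j - int \<tau> \<le> int (k j)"
    and k_hi: "\<And>j. k j \<le> j"
  shows "cr_err A b \<beta> x0 k (Suc j) \<ge> (1 - lambda_max A / real CARD('n)) * cr_err A b \<beta> x0 k j"
proof -
  define P where "P (m::nat) = Pi_pmf {..<m} undefined (\<lambda>_. pmf_of_set (UNIV :: 'n set))" for m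
  let ?F = "cr_sq_err A b \<beta> x0 k" and ?n = "real CARD('n)"
  have psd: "0 \<le> z \<bullet> (A *v z)" for z
    using posdef[of z] by (cases "z = 0") auto
  have step: "(1 - lambda_max A / ?n) * ?F d j \<le> (\<Sum>i\<in>UNIV. ?F (d(j := i)) (Suc j)) / ?n" for d
  proof -
    have "(?n - lambda_max A) * ?F d j / ?n \<le> (\<Sum>i\<in>UNIV. ?F (d(j := i)) (Suc j)) / ?n"
      by (intro divide_right_mono cr_sq_err_fun_upd_sum_ge[OF sym psd diag k_hi]) simp
    then show ?thesis by (simp add: field_simps)
  qed
  have "(1 - lambda_max A / ?n) * cr_err A b \<beta> x0 k j
        = measure_pmf.expectation (P j) (\<lambda>d. (1 - lambda_max A / ?n) * ?F d j)"
    by (simp add: cr_err_def cr_sq_err_def P_def)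
  also have "\<dots> \<le> measure_pmf.expectation (P j) (\<lambda>d. (\<Sum>i\<in>UNIV. ?F (d(j := i)) (Suc j)) / ?n)"
    by (intro integral_mono step integrable_measure_pmf_finite) (simp_all add: P_def finite_set_Pi_pmf)
  also have "\<dots> = cr_err A b \<beta> x0 k (Suc j)"
    by (simp add: cr_err_def cr_sq_err_def P_def expectation_Pi_pmf_uniform_Suc)
  finally show ?thesis .
qed

end
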